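(* Let $d\geq 2$ be a fixed integer, let $n\geq d\cdot 64^{d \log d}$ be an integer and let $k$ be a positive integer with $k \leq n^{(d-1)/d}\cdot (5d)^{1/d-2}$. Define $h = \left\lceil \left(\tfrac{9d}{2}\cdot (k+2)\right)^{1/(d-1)} -1\right\rceil$ and $m=\left\lfloor n/ \left(d\cdot (h+1)^d+ d\cdot (h+1)^{d-1}\right)\right\rfloor$, and for $i\in\{1,\dots,d\}$ let $$P_i=\bigcup^{h}_{j_1=0}\cdots \bigcup^{h}_{j_d=0}\{ (j_1 m,\dots,j_{i-1} m,x_i,j_{i+1} m,\dots,j_d m) \mid x_i\in \{0, \dots, h m\}\}\subset\mathbb{R}^d,$$ and $P_{d,n,k}=\bigcup_{i=1}^d P_i$. Then $m\geq 1$ (so $P_{d,n,k}$ is well-defined, resembling the $(h+1)^d$-grid with each grid edge subdivided into $m$ unit segments) and $|P_{d,n,k}|\leq n$. *)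

theory Defs
  imports "HOL-Analysis.Analysis"
begin

definition grid_h :: "nat \<Rightarrow> nat \<Rightarrow> int" where
  "grid_h d k = \<lceil>((9 * real d / 2) * (real k + 2)) powr (1 / (real d - 1)) - 1\<rceil>"

definition grid_m :: "nat \<Rightarrow> nat \<Rightarrow> nat \<Rightarrow> int" where
  "grid_m d n k = \<lfloor>real n / (real d * (real_of_int (grid_h d k) + 1) ^ d
                     + real d * (real_of_int (grid_h d k) + 1) ^ (d - 1))\<rfloor>"

definition grid_P_i :: "int \<Rightarrow> int \<Rightarrow> 'n::finite \<Rightarrow> (real^'n) set" where
  "grid_P_i h m i = {x. (\<forall>j. j \<noteq> i \<longrightarrow> (\<exists>t::int. 0 \<le> t \<and> t \<le> h \<and> x $ j = of_int (t * m)))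
                     \<and> (\<exists>s::int. 0 \<le> s \<and> s \<le> h * m \<and> x $ i = of_int s)}"

definition grid_P :: "nat \<Rightarrow> nat \<Rightarrow> (real^'n::finite) set" where
  "grid_P n k = (\<Union>i. grid_P_i (grid_h CARD('n) k) (grid_m CARD('n) n k) i)"

end

theory Submission
  imports Defs
begin

text \<open>Each P_i is the image of {0..h}^(d-1) \<times> {0..hm}, so the grid has at most
  d (h+1)^(d-1) (hm+1) \<le> m X points, where X = d (h+1)^d + d (h+1)^(d-1) is the denominator in
  the definition of m; hence it has at most n points, and m \<ge> 1, as soon as X \<le> n.
  With a = ((9d/2)(k+2))^(1/(d-1)) we have h + 1 < a + 1, so it suffices that d (a+2)^d \<le> n.
  If a \<le> 31d, then a + 2 \<le> d^6, and d (d^6)^d = d 64^(d log d) is the assumed lower bound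
  on n. Otherwise a \<ge> 2d gives (a+2)^d \<le> e a^d, and a \<ge> 31d forces k \<ge> 5, so that
  (9d/2)(k+2) \<le> 1.26 (5dk); the assumed upper bound on k says exactly
  (5dk)^(d/(d-1)) \<le> n/(5d), and together d (a+2)^d \<le> 3 (1.26^2) n/5 < n.\<close>

lemma grid_P_i_subset_image:
  fixes i :: "'n::finite"
  shows "grid_P_i h m i \<subseteq>
    (\<lambda>(t, s). \<chi> j. if j = i then of_int s else of_int (t j * m)) `
      (PiE (- {i}) (\<lambda>_. {0..h}) \<times> {0..h * m})"
proof
  fix x :: "real^'n"
  assume x: "x \<in> grid_P_i h m i"
  then have "\<forall>j. \<exists>t. j \<noteq> i \<longrightarrow> 0 \<le> t \<and> t \<le> h \<and> x $ j = of_int (t * m)"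
    unfolding grid_P_i_def by blast
  then obtain t where t: "\<And>j. j \<noteq> i \<Longrightarrow> 0 \<le> t j \<and> t j \<le> h \<and> x $ j = of_int (t j * m)"
    by (metis choice)
  obtain s where s: "0 \<le> s" "s \<le> h * m" "x $ i = of_int s"
    using x unfolding grid_P_i_def by blast
  have "x = (\<lambda>(t, s). \<chi> j. if j = i then of_int s else of_int (t j * m)) (restrict t (- {i}), s)"
    using t s by (auto simp: vec_eq_iff)
  moreover have "(restrict t (- {i}), s) \<in> PiE (- {i}) (\<lambda>_. {0..h}) \<times> {0..h * m}"
    using t s by auto
  ultimately show "x \<in> (\<lambda>(t, s). \<chi> j. if j = i then of_int s else of_int (t j * m)) `
      (PiE (- {i}) (\<lambda>_. {0..h}) \<times> {0..h * m})"
    by (rule image_eqI)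
qed

lemma finite_grid_P_i: "finite (grid_P_i h m i :: (real^'n::finite) set)"
  using grid_P_i_subset_image by (rule finite_subset) (simp add: finite_PiE)

lemma card_grid_P_i_le:
  fixes i :: "'n::finite"
  shows "card (grid_P_i h m i) \<le> nat (h + 1) ^ (CARD('n) - 1) * nat (h * m + 1)"
proof -
  have "card (grid_P_i h m i) \<le> card (PiE (- {i}) (\<lambda>_. {0..h}) \<times> {0..h * m})"
    using grid_P_i_subset_image by (rule surj_card_le [rotated]) (simp add: finite_PiE)
  then show ?thesis
    by (simp add: card_cartesian_product card_PiE Compl_eq_Diff_UNIV card_Diff_singleton)
qed

lemma card_Union_grid_P_i_le:
  "card (\<Union>i. grid_P_i h m i :: (real^'n::finite) set)
     \<le> CARD('n) * (nat (h + 1) ^ (CARD('n) - 1) * nat (h * m + 1))"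
proof -
  have "card (\<Union>i. grid_P_i h m i :: (real^'n) set)
      \<le> (\<Sum>i\<in>UNIV. card (grid_P_i h m i :: (real^'n) set))"
    by (rule card_UN_le) simp
  also have "\<dots> \<le> (\<Sum>i\<in>(UNIV::'n set). nat (h + 1) ^ (CARD('n) - 1) * nat (h * m + 1))"
    by (intro sum_mono card_grid_P_i_le)
  finally show ?thesis
    by simp
qed

lemma grid_count_le_mult_denominator:
  fixes h m :: int
  assumes "0 \<le> h" "1 \<le> m" "1 \<le> d"
  shows "real (d * (nat (h + 1) ^ (d - 1) * nat (h * m + 1)))
    \<le> of_int m * (real d * (of_int h + 1) ^ d + real d * (of_int h + 1) ^ (d - 1))"
proof -
  have "real (d * (nat (h + 1) ^ (d - 1) * nat (h * m + 1)))
      = real d * ((of_int h + 1) ^ (d - 1) * (of_int h * of_int m + 1))"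
    using assms by (simp add: of_nat_nat)
  also have "\<dots> \<le> real d * ((of_int h + 1) ^ (d - 1) * ((of_int h + 1) * of_int m))"
    using assms by (intro mult_left_mono) (auto simp: algebra_simps)
  also have "\<dots> = of_int m * (real d * ((of_int h + 1) ^ (d - 1) * (of_int h + 1)))"
    by (simp only: mult_ac)
  also have "\<dots> = of_int m * (real d * (of_int h + 1) ^ d)"
    using assms power_minus_mult [of d "of_int h + 1"] by simp
  also have "\<dots> \<le> of_int m * (real d * (of_int h + 1) ^ d + real d * (of_int h + 1) ^ (d - 1))"
    using assms by (intro mult_left_mono) auto
  finally show ?thesis .
qed

lemma card_Union_grid_P_i_le_mult_denominator:
  fixes h m :: int
  defines "H \<equiv> real_of_int h + 1"
  assumes "0 \<le> h" "1 \<le> m"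
  shows "real (card (\<Union>i. grid_P_i h m i :: (real^'n::finite) set))
    \<le> of_int m * (real CARD('n) * H ^ CARD('n) + real CARD('n) * H ^ (CARD('n) - 1))"
proof -
  have "real (card (\<Union>i. grid_P_i h m i :: (real^'n) set))
      \<le> real (CARD('n) * (nat (h + 1) ^ (CARD('n) - 1) * nat (h * m + 1)))"
    using card_Union_grid_P_i_le by (rule of_nat_mono)
  also have "\<dots> \<le> of_int m * (real CARD('n) * H ^ CARD('n) + real CARD('n) * H ^ (CARD('n) - 1))"
    unfolding H_def using assms by (intro grid_count_le_mult_denominator) auto
  finally show ?thesis .
qed

lemma finite_grid_P: "finite (grid_P n k :: (real^'n::finite) set)"
  unfolding grid_P_def by (simp add: finite_grid_P_i)

lemma power_add_power_pred_le:
  fixes H a :: real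
  assumes "1 \<le> d" "0 \<le> H" "H \<le> a + 1"
  shows "H ^ d + H ^ (d - 1) \<le> (a + 2) ^ d"
proof -
  have "H ^ d + H ^ (d - 1) = H ^ (d - 1) * (H + 1)"
    using assms power_minus_mult [of d H] by (simp add: distrib_left)
  also have "\<dots> \<le> (a + 2) ^ (d - 1) * (a + 2)"
    using assms by (intro mult_mono power_mono) auto
  also have "\<dots> = (a + 2) ^ d"
    using assms by (intro power_minus_mult) simp
  finally show ?thesis .
qed

lemma sixty_four_powr_d_log_d:
  assumes "0 < d"
  shows "64 powr (real d * log 2 (real d)) = real d ^ (6 * d)"
proof -
  have "(2::real) powr 6 = 64"
    by (simp add: powr_realpow [of 2 6, simplified])
  then have "64 powr (real d * log 2 (real d)) = (2 powr 6) powr (real d * log 2 (real d))"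
    by (simp only:)
  also have "\<dots> = (2 powr log 2 (real d)) powr (6 * real d)"
    by (simp only: powr_powr) (simp add: mult_ac)
  also have "\<dots> = real d ^ (6 * d)"
    using assms powr_realpow [of "real d" "6 * d"] by simp
  finally show ?thesis .
qed

lemma add_power_le_three_mult_power:
  fixes a c :: real
  assumes "0 < a" "0 \<le> c" "real d * c \<le> a"
  shows "(a + c) ^ d \<le> 3 * a ^ d"
proof -
  have "(1 + c / a) ^ d \<le> exp (c / a) ^ d"
    using assms by (intro power_mono) auto
  also have "\<dots> = exp (real d * (c / a))"
    by (rule exp_of_nat_mult [symmetric])
  also have "\<dots> \<le> exp 1"
    using assms by (simp add: field_simps)
  also have "\<dots> \<le> 3"
    by (rule exp_le)
  finally have "(1 + c / a) ^ d \<le> 3" .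
  moreover have "(a + c) ^ d = a ^ d * (1 + c / a) ^ d"
    using assms by (simp add: field_simps flip: power_mult_distrib)
  ultimately show ?thesis
    using assms by (simp add: mult_left_mono)
qed

lemma powr_conjugate_le_of_le:
  fixes D k n :: real
  assumes "1 < D" "0 \<le> k" "0 \<le> n"
    and "k \<le> n powr ((D - 1) / D) * (5 * D) powr (1 / D - 2)"
  shows "(5 * D * k) powr (D / (D - 1)) \<le> n / (5 * D)"
proof -
  define q where "q = D / (D - 1)"
  have "k powr q \<le> (n powr ((D - 1) / D) * (5 * D) powr (1 / D - 2)) powr q"
    using assms unfolding q_def by (intro powr_mono2) auto
  also have "\<dots> = n powr ((D - 1) / D * q) * (5 * D) powr ((1 / D - 2) * q)"
    using assms by (simp add: powr_mult powr_powr)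
  also have "\<dots> = n * (5 * D) powr (- 1 - q)"
  proof -
    have "(D - 1) / D * q = 1" and "(1 / D - 2) * q = - 1 - q"
      using assms unfolding q_def by (simp_all add: field_simps)
    then show ?thesis
      using assms by simp
  qed
  finally have "k powr q \<le> n * (5 * D) powr (- 1 - q)" .
  then have "(5 * D) powr q * k powr q \<le> (5 * D) powr q * (n * (5 * D) powr (- 1 - q))"
    by (intro mult_left_mono) auto
  also have "\<dots> = n * (5 * D) powr (q + (- 1 - q))"
    by (simp only: powr_add mult_ac)
  also have "\<dots> = n / (5 * D)"
    using assms by (simp add: powr_minus_divide)
  finally show ?thesis
    using assms unfolding q_def by (simp add: powr_mult)
qed

lemma powr_inverse_le_self:
  fixes A p :: real
  assumes "1 \<le> p" "1 \<le> A"
  shows "A powr (1 / p) \<le> A"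
proof -
  have "A powr (1 / p) \<le> A powr 1"
    using assms by (intro powr_mono) auto
  then show ?thesis
    using assms by simp
qed

lemma grid_radius_bound_small:
  fixes a n :: real
  assumes "2 \<le> d" "0 \<le> a" "a \<le> 31 * real d"
    and "real d * 64 powr (real d * log 2 (real d)) \<le> n"
  shows "real d * (a + 2) ^ d \<le> n"
proof -
  have "(2::real) ^ 5 * real d \<le> real d ^ 5 * real d"
    using assms by (intro mult_right_mono power_mono) auto
  then have "a + 2 \<le> real d ^ 6"
    using assms by (simp add: power_Suc2 [symmetric] del: power_Suc)
  then have "(a + 2) ^ d \<le> (real d ^ 6) ^ d"
    using assms by (intro power_mono) auto
  also have "\<dots> = 64 powr (real d * log 2 (real d))"
    using assms by (simp add: sixty_four_powr_d_log_d power_mult)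
  finally have "real d * (a + 2) ^ d \<le> real d * 64 powr (real d * log 2 (real d))"
    by (intro mult_left_mono) auto
  with assms show ?thesis
    by linarith
qed

lemma grid_radius_bound_large:
  fixes d k :: nat and a n :: real
  defines "D \<equiv> real d"
  assumes "2 \<le> d" "0 \<le> n"
    and a: "a = ((9 * D / 2) * (real k + 2)) powr (1 / (D - 1))"
    and large: "31 * D \<le> a"
    and "real k \<le> n powr ((D - 1) / D) * (5 * D) powr (1 / D - 2)"
  shows "D * (a + 2) ^ d \<le> n"
proof -
  define A where "A = (9 * D / 2) * (real k + 2)"
  have D: "2 \<le> D"
    using assms unfolding D_def by simp
  then have "1 \<le> A"
    unfolding A_def using mult_mono [of 1 "9 * D / 2" 1 "real k + 2"] by simp
  then have "a \<le> A"
    unfolding a A_def [symmetric] using D by (intro powr_inverse_le_self) auto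
  with large have "D * 31 \<le> D * (9 / 2 * (real k + 2))"
    unfolding A_def by (simp add: algebra_simps)
  then have "5 \<le> k"
    using D by (simp add: mult_le_cancel_left_pos)
  then have "D * (9 / 2 * (real k + 2)) \<le> D * ((126 / 100) * 5 * real k)"
    using D by (intro mult_left_mono) auto
  then have "A \<le> (126 / 100) * (5 * D * real k)"
    unfolding A_def by (simp add: algebra_simps)
  have "(a + 2) ^ d \<le> 3 * a ^ d"
    using assms D by (intro add_power_le_three_mult_power) (auto simp: D_def)
  also have "a ^ d = A powr (D / (D - 1))"
    using \<open>1 \<le> A\<close> D unfolding a A_def D_def by (simp add: powr_powr flip: powr_realpow)
  also have "\<dots> \<le> ((126 / 100) * (5 * D * real k)) powr (D / (D - 1))"
    using \<open>1 \<le> A\<close> \<open>A \<le> _\<close> D by (intro powr_mono2) auto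
  also have "\<dots> = (126 / 100) powr (D / (D - 1)) * (5 * D * real k) powr (D / (D - 1))"
    by (rule powr_mult)
  also have "\<dots> \<le> (126 / 100) powr 2 * (n / (5 * D))"
    using D assms
    by (intro mult_mono powr_mono powr_conjugate_le_of_le) (auto simp: field_simps)
  finally have "(a + 2) ^ d \<le> 3 * ((126 / 100) ^ 2 * (n / (5 * D)))"
    by (simp add: powr_realpow)
  then have "D * (a + 2) ^ d \<le> D * (3 * ((126 / 100) ^ 2 * (n / (5 * D))))"
    using D by (intro mult_left_mono) auto
  also have "\<dots> \<le> n"
    using D assms by (simp add: field_simps)
  finally show ?thesis .
qed

lemma grid_h_nonneg:
  assumes "0 < d"
  shows "0 \<le> grid_h d k"
  using assms unfolding grid_h_def by simp

lemma grid_m_denominator_le: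
  fixes d n k :: nat
  defines "H \<equiv> of_int (grid_h d k) + 1"
  assumes "2 \<le> d"
    and "real n \<ge> real d * 64 powr (real d * log 2 (real d))"
    and "real k \<le> real n powr ((real d - 1) / real d) * (5 * real d) powr (1 / real d - 2)"
  shows "real d * H ^ d + real d * H ^ (d - 1) \<le> real n"
proof -
  define a where "a = ((9 * real d / 2) * (real k + 2)) powr (1 / (real d - 1))"
  have "0 < a"
    using assms(2) unfolding a_def by simp
  have radius: "real d * (a + 2) ^ d \<le> real n"
  proof (cases "a \<le> 31 * real d")
    case True
    show ?thesis
      using assms(2) less_imp_le [OF \<open>0 < a\<close>] True assms(3)
      by (rule grid_radius_bound_small)
  next
    case False
    then have "31 * real d \<le> a"
      by simp
    with assms(2) of_nat_0_le_iff a_def show ?thesis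
      using assms(4) by (rule grid_radius_bound_large)
  qed
  have "grid_h d k = \<lceil>a - 1\<rceil>"
    unfolding grid_h_def a_def ..
  then have "H ^ d + H ^ (d - 1) \<le> (a + 2) ^ d"
    unfolding H_def using assms(2) \<open>0 < a\<close> ceiling_correct [of "a - 1"]
    by (intro power_add_power_pred_le) auto
  then have "real d * (H ^ d + H ^ (d - 1)) \<le> real d * (a + 2) ^ d"
    by (intro mult_left_mono) auto
  with radius show ?thesis
    by (simp only: distrib_left [symmetric])
qed

theorem lemma14:
  fixes n k :: nat
  defines "d \<equiv> CARD('n::finite)"
  assumes "d \<ge> 2"
    and "real n \<ge> real d * 64 powr (real d * log 2 (real d))"
    and "k \<ge> 1"
    and "real k \<le> real n powr ((real d - 1) / real d) * (5 * real d) powr (1 / real d - 2)"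
  shows "grid_m d n k \<ge> 1 \<and> finite (grid_P n k :: (real^'n) set)
         \<and> card (grid_P n k :: (real^'n) set) \<le> n"
proof -
  define H where "H = real_of_int (grid_h d k) + 1"
  define X where "X = real d * H ^ d + real d * H ^ (d - 1)"
  have "0 \<le> grid_h d k"
    using assms(2) by (intro grid_h_nonneg) simp
  then have "0 < X"
    unfolding X_def H_def using assms(2) by (simp add: add_pos_pos)
  have "X \<le> real n"
    unfolding X_def H_def using assms(2,3,5) by (rule grid_m_denominator_le)
  have m: "grid_m d n k = \<lfloor>real n / X\<rfloor>"
    unfolding grid_m_def X_def H_def ..
  have "1 \<le> grid_m d n k"
    unfolding m one_le_floor pos_le_divide_eq [OF \<open>0 < X\<close>] using \<open>X \<le> real n\<close> by simp
  have "real (card (grid_P n k :: (real^'n) set)) \<le> of_int (grid_m d n k) * X"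
    using \<open>0 \<le> grid_h d k\<close> \<open>1 \<le> grid_m d n k\<close>
    unfolding grid_P_def X_def H_def d_def by (rule card_Union_grid_P_i_le_mult_denominator)
  also have "\<dots> \<le> real n"
    unfolding m using \<open>0 < X\<close> by (rule floor_divide_lower)
  finally show ?thesis
    using \<open>1 \<le> grid_m d n k\<close> finite_grid_P by simp
qed

end
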